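(* Let $(X,\le)$ be a non-empty strictly inductive poset, $f:X\to X$ and $a_0\in X$ with $a_0\le f(a_0)$. Let $W$ be the set of elements of $X$ that are the least upper bound of some $a_0$-chain, and let $N$ be the smallest subset of $X$ containing $a_0$, closed under $f$, and closed under non-empty least upper bounds. If $f$ is monotone on $W$ (i.e. $f(x)\le f(y)$ for all $x,y\in W$ with $x\le y$), then $N\subseteq W$.
   Context: A poset is strictly inductive if every non-empty chain has a least upper bound $\mathrm{lub}$ in $X$. A set $Z\subseteq X$ is closed under $f$ if $f(z)\in Z$ for all $z\in Z$, and closed under non-empty least upper bounds if for every non-empty $P\subseteq Z$, $\mathrm{lub}(P)$ exists and belongs to $Z$. A subset $C\subseteq X$ is an $a_0$-chain (with respect to $f$) if: $C$ is well ordered by $\le$; $a_0$ is the least element of $C$; $C$ is closed under non-empty least upper bounds; and for every $z\in C\setminus\{\mathrm{lub}(C)\}$ we have $f(z)\in C$, $z<f(z)$, and there is no $y\in C$ with $z<y<f(z)$. *)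

theory Defs
  imports Main
begin

text \<open>The poset is a carrier set X inside a type with a partial order.
  Least upper bounds are taken relative to X.\<close>

definition is_lub :: "'a::order set \<Rightarrow> 'a set \<Rightarrow> 'a \<Rightarrow> bool" where
  "is_lub X P u \<longleftrightarrow> u \<in> X \<and> (\<forall>p\<in>P. p \<le> u) \<and>
     (\<forall>y\<in>X. (\<forall>p\<in>P. p \<le> y) \<longrightarrow> u \<le> y)"

definition lub :: "'a::order set \<Rightarrow> 'a set \<Rightarrow> 'a" where
  "lub X P = (THE u. is_lub X P u)"

definition is_chain :: "'a::order set \<Rightarrow> bool" where
  "is_chain C \<longleftrightarrow> (\<forall>x\<in>C. \<forall>y\<in>C. x \<le> y \<or> y \<le> x)"

definition strictly_inductive :: "'a::order set \<Rightarrow> bool" where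
  "strictly_inductive X \<longleftrightarrow>
     (\<forall>C. C \<subseteq> X \<and> C \<noteq> {} \<and> is_chain C \<longrightarrow> (\<exists>u. is_lub X C u))"

definition closed_under :: "('a \<Rightarrow> 'a) \<Rightarrow> 'a set \<Rightarrow> bool" where
  "closed_under f Z \<longleftrightarrow> (\<forall>z\<in>Z. f z \<in> Z)"

definition closed_under_lubs :: "'a::order set \<Rightarrow> 'a set \<Rightarrow> bool" where
  "closed_under_lubs X Z \<longleftrightarrow>
     (\<forall>P. P \<subseteq> Z \<and> P \<noteq> {} \<longrightarrow> (\<exists>u. is_lub X P u) \<and> lub X P \<in> Z)"

definition well_ordered_set :: "'a::order set \<Rightarrow> bool" where
  "well_ordered_set C \<longleftrightarrow> (\<forall>S. S \<subseteq> C \<and> S \<noteq> {} \<longrightarrow> (\<exists>m\<in>S. \<forall>s\<in>S. m \<le> s))"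

definition a0_chain :: "'a::order set \<Rightarrow> ('a \<Rightarrow> 'a) \<Rightarrow> 'a \<Rightarrow> 'a set \<Rightarrow> bool" where
  "a0_chain X f a0 C \<longleftrightarrow>
     C \<subseteq> X \<and> well_ordered_set C \<and>
     a0 \<in> C \<and> (\<forall>c\<in>C. a0 \<le> c) \<and>
     closed_under_lubs X C \<and>
     (\<forall>z\<in>C - {lub X C}. f z \<in> C \<and> z < f z \<and> \<not> (\<exists>y\<in>C. z < y \<and> y < f z))"

end

theory Submission
  imports Defs
begin

text \<open>Any two \<open>a0\<close>-chains are comparable: one is an initial segment of the other. This is
  shown by well-founded induction along one chain, every element of an \<open>a0\<close>-chain being
  \<open>a0\<close>, the lub of its predecessors, or the \<open>f\<close>-image of its immediate predecessor.
  Consequently the union \<open>M\<close> (\<open>union_chains\<close>) of all \<open>a0\<close>-chains is itself an \<open>a0\<close>-chain, the largest one,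
  and every element of \<open>M\<close> is the lub of the initial segment it cuts off, so \<open>M \<subseteq> W\<close>.
  Monotonicity of \<open>f\<close> on \<open>W\<close> gives \<open>lub M \<le> f (lub M)\<close>; were this strict, adjoining
  \<open>f (lub M)\<close> would produce a longer \<open>a0\<close>-chain. So \<open>M\<close> contains \<open>a0\<close> and is closed under
  \<open>f\<close> and under lubs, whence \<open>N \<subseteq> M \<subseteq> W\<close>.\<close>

lemma is_lub_unique: "is_lub X P u \<Longrightarrow> is_lub X P v \<Longrightarrow> u = v"
  unfolding is_lub_def by (blast intro: antisym)

lemma lub_eqI: "is_lub X P u \<Longrightarrow> lub X P = u"
  unfolding lub_def by (rule the_equality) (blast intro: is_lub_unique)+

lemma is_lub_mem: "is_lub X P u \<Longrightarrow> u \<in> X"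
  unfolding is_lub_def by blast

lemma is_lub_upper: "is_lub X P u \<Longrightarrow> p \<in> P \<Longrightarrow> p \<le> u"
  unfolding is_lub_def by blast

lemma is_lub_least: "is_lub X P u \<Longrightarrow> y \<in> X \<Longrightarrow> (\<And>p. p \<in> P \<Longrightarrow> p \<le> y) \<Longrightarrow> u \<le> y"
  unfolding is_lub_def by blast

lemma well_ordered_set_chain:
  "well_ordered_set C \<Longrightarrow> x \<in> C \<Longrightarrow> y \<in> C \<Longrightarrow> x \<le> y \<or> y \<le> x"
  unfolding well_ordered_set_def by (erule allE[of _ "{x, y}"]) auto

lemma well_ordered_set_induct [consumes 2, case_names less]:
  assumes wo: "well_ordered_set C" and "c \<in> C"
    and step: "\<And>c. c \<in> C \<Longrightarrow> (\<And>b. b \<in> C \<Longrightarrow> b < c \<Longrightarrow> P b) \<Longrightarrow> P c"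
  shows "P c"
proof (rule ccontr)
  assume "\<not> P c"
  with \<open>c \<in> C\<close> obtain m where m: "m \<in> C" "\<not> P m" and least: "\<forall>s\<in>{x\<in>C. \<not> P x}. m \<le> s"
    using wo unfolding well_ordered_set_def
    by (metis (no_types, lifting) empty_iff mem_Collect_eq subsetI)
  have "P m"
    using m(1) by (rule step) (use least in \<open>auto dest: leD\<close>)
  with m(2) show False ..
qed

lemma well_ordered_set_subset: "well_ordered_set C \<Longrightarrow> S \<subseteq> C \<Longrightarrow> well_ordered_set S"
  unfolding well_ordered_set_def by blast

lemma well_ordered_set_insert_top:
  assumes wo: "well_ordered_set C" and top: "\<forall>c\<in>C. c \<le> t"
  shows "well_ordered_set (insert t C)"
  unfolding well_ordered_set_def
proof (intro allI impI)
  fix S assume S: "S \<subseteq> insert t C \<and> S \<noteq> {}"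
  show "\<exists>m\<in>S. \<forall>s\<in>S. m \<le> s"
  proof (cases "S \<inter> C = {}")
    case True
    with S have "S = {t}" by auto
    then show ?thesis by simp
  next
    case False
    then obtain m where "m \<in> S \<inter> C" "\<forall>s\<in>S \<inter> C. m \<le> s"
      using wo unfolding well_ordered_set_def by (meson inf_le2)
    with S top show ?thesis by blast
  qed
qed

definition initial_segment :: "'a::order set \<Rightarrow> 'a set \<Rightarrow> bool" where
  "initial_segment C D \<longleftrightarrow> C \<subseteq> D \<and> (\<forall>d\<in>D. \<forall>c\<in>C. d \<le> c \<longrightarrow> d \<in> C)"

lemma initial_segment_Union:
  assumes "\<forall>C\<in>F. \<forall>D\<in>F. initial_segment C D \<or> initial_segment D C" and "C \<in> F"
  shows "initial_segment C (\<Union>F)"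
  using assms unfolding initial_segment_def by blast

lemma well_ordered_set_Union:
  assumes wo: "\<forall>C\<in>F. well_ordered_set C"
    and comp: "\<forall>C\<in>F. \<forall>D\<in>F. initial_segment C D \<or> initial_segment D C"
  shows "well_ordered_set (\<Union>F)"
  unfolding well_ordered_set_def
proof (intro allI impI)
  fix S assume S: "S \<subseteq> \<Union>F \<and> S \<noteq> {}"
  then obtain C where C: "C \<in> F" "S \<inter> C \<noteq> {}" by blast
  then obtain m where m: "m \<in> S \<inter> C" "\<forall>s\<in>S \<inter> C. m \<le> s"
    using wo unfolding well_ordered_set_def by (meson inf_le2)
  have "m \<le> s" if "s \<in> S" for s
  proof -
    from S that obtain D where D: "D \<in> F" "s \<in> D" by blast
    show "m \<le> s"
    proof (cases "initial_segment C D")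
      case True
      then have "m \<in> D" using m(1) unfolding initial_segment_def by blast
      then have "m \<le> s \<or> s \<le> m" using well_ordered_set_chain wo D by blast
      then show ?thesis using True m that D(2) unfolding initial_segment_def by blast
    next
      case False
      then have "s \<in> C" using comp C(1) D unfolding initial_segment_def by blast
      then show ?thesis using m(2) that by blast
    qed
  qed
  then show "\<exists>m\<in>S. \<forall>s\<in>S. m \<le> s" using m(1) by blast
qed

locale a0_chains =
  fixes X :: "'a::order set" and f :: "'a \<Rightarrow> 'a" and a0 :: 'a
  assumes strictly_inductive: "strictly_inductive X"
    and f_closed: "\<forall>x\<in>X. f x \<in> X"
    and a0_in_X: "a0 \<in> X"
begin

abbreviation is_a0_chain :: "'a set \<Rightarrow> bool" where
  "is_a0_chain C \<equiv> a0_chain X f a0 C"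

lemma well_ordered_is_lub:
  assumes "P \<subseteq> X" "P \<noteq> {}" "well_ordered_set P"
  shows "is_lub X P (lub X P)"
proof -
  have "is_chain P" using assms(3) well_ordered_set_chain unfolding is_chain_def by blast
  with assms obtain u where "is_lub X P u"
    using strictly_inductive unfolding strictly_inductive_def by blast
  then show ?thesis by (simp add: lub_eqI)
qed

subsection \<open>A single \<open>a0\<close>-chain\<close>

context
  fixes C assumes C: "is_a0_chain C"
begin

lemma a0_chain_subset: "C \<subseteq> X"
  using C unfolding a0_chain_def by blast

lemma a0_chain_well_ordered: "well_ordered_set C"
  using C unfolding a0_chain_def by blast

lemma a0_chain_comparable: "x \<in> C \<Longrightarrow> y \<in> C \<Longrightarrow> x \<le> y \<or> y \<le> x"
  using a0_chain_well_ordered well_ordered_set_chain by blast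

lemma a0_in_a0_chain: "a0 \<in> C"
  using C unfolding a0_chain_def by blast

lemma a0_le_a0_chain: "c \<in> C \<Longrightarrow> a0 \<le> c"
  using C unfolding a0_chain_def by blast

lemma a0_chain_is_lub: "P \<subseteq> C \<Longrightarrow> P \<noteq> {} \<Longrightarrow> is_lub X P (lub X P)"
  using C lub_eqI unfolding a0_chain_def closed_under_lubs_def by metis

lemma a0_chain_lub_mem: "P \<subseteq> C \<Longrightarrow> P \<noteq> {} \<Longrightarrow> lub X P \<in> C"
  using C unfolding a0_chain_def closed_under_lubs_def by blast

lemma a0_chain_top_mem: "lub X C \<in> C"
  using a0_chain_lub_mem a0_in_a0_chain by blast

lemma a0_chain_le_top: "c \<in> C \<Longrightarrow> c \<le> lub X C"
  using is_lub_upper[OF a0_chain_is_lub] a0_in_a0_chain by blast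

lemma a0_chain_succ:
  assumes "z \<in> C" "z \<noteq> lub X C"
  shows "f z \<in> C" "z < f z" "\<forall>y\<in>C. \<not> (z < y \<and> y < f z)"
  using C assms unfolding a0_chain_def by auto

lemma a0_chain_limit_or_successor:
  assumes c: "c \<in> C" "c \<noteq> a0"
  obtains "is_lub X {y\<in>C. y < c} c"
    | m where "m \<in> C" "m < c" "\<forall>b\<in>C. b < c \<longrightarrow> b \<le> m" "f m = c"
proof -
  let ?B = "{y\<in>C. y < c}" and ?m = "lub X {y\<in>C. y < c}"
  have B_sub: "?B \<subseteq> C" by blast
  have "a0 < c" using a0_le_a0_chain c by (simp add: order.not_eq_order_implies_strict)
  then have "?B \<noteq> {}" using a0_in_a0_chain by blast
  then have B: "is_lub X ?B ?m" "?m \<in> C"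
    using a0_chain_is_lub[OF B_sub] a0_chain_lub_mem[OF B_sub] by simp_all
  have "?m \<le> c" using c(1) a0_chain_subset by (intro is_lub_least[OF B(1)]) auto
  show thesis
  proof (cases "?m = c")
    case False
    with \<open>?m \<le> c\<close> have "?m < c" by simp
    have below: "\<forall>b\<in>C. b < c \<longrightarrow> b \<le> ?m" using is_lub_upper[OF B(1)] by blast
    have "?m \<noteq> lub X C" using \<open>?m < c\<close> a0_chain_le_top[OF c(1)] by auto
    note succ = a0_chain_succ[OF B(2) this]
    have "\<not> c < f ?m" using succ(3) c(1) \<open>?m < c\<close> by blast
    then have "f ?m \<le> c" using a0_chain_comparable[OF succ(1) c(1)] by (metis le_less)
    moreover have "\<not> f ?m < c" using succ(1,2) below by (meson leD)
    ultimately have "f ?m = c" by (simp add: le_less)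
    then show thesis using that(2) B(2) \<open>?m < c\<close> below by blast
  qed (use that(1) B(1) in simp)
qed

lemma lub_a0_chain_down: "c \<in> C \<Longrightarrow> lub X {y\<in>C. y \<le> c} = c"
  using a0_chain_subset by (intro lub_eqI) (auto simp: is_lub_def)

lemma a0_chain_down:
  assumes c: "c \<in> C"
  shows "is_a0_chain {y\<in>C. y \<le> c}"
proof -
  let ?S = "{y\<in>C. y \<le> c}"
  have "c \<in> X" using c a0_chain_subset by blast
  have lubs: "closed_under_lubs X ?S"
    unfolding closed_under_lubs_def
  proof (intro allI impI)
    fix Q assume Q: "Q \<subseteq> ?S \<and> Q \<noteq> {}"
    then have "is_lub X Q (lub X Q)" "lub X Q \<in> C"
      using a0_chain_is_lub a0_chain_lub_mem by blast+
    moreover from this(1) \<open>c \<in> X\<close> have "lub X Q \<le> c"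
      by (rule is_lub_least) (use Q in blast)
    ultimately show "(\<exists>u. is_lub X Q u) \<and> lub X Q \<in> ?S" by blast
  qed
  have succ: "f z \<in> ?S \<and> z < f z \<and> \<not> (\<exists>y\<in>?S. z < y \<and> y < f z)"
    if z: "z \<in> ?S - {lub X ?S}" for z
  proof -
    from z have "z \<in> C" "z < c" using lub_a0_chain_down[OF c] by auto
    moreover from this have "z \<noteq> lub X C" using a0_chain_le_top[OF c] by (auto dest: leD)
    ultimately have "f z \<in> C" "z < f z" "\<forall>y\<in>C. \<not> (z < y \<and> y < f z)"
      using a0_chain_succ by blast+
    moreover from this have "f z \<le> c"
      using a0_chain_comparable[OF _ c] c \<open>z < c\<close> by (metis less_le)
    ultimately show ?thesis by blast
  qed
  show ?thesis
    unfolding a0_chain_def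
    using a0_chain_subset a0_chain_well_ordered a0_in_a0_chain a0_le_a0_chain c lubs succ
    by (auto intro: well_ordered_set_subset)
qed

lemma a0_chain_le_f:
  assumes "a0 \<le> f a0" and mono: "\<forall>x\<in>C. \<forall>y\<in>C. x \<le> y \<longrightarrow> f x \<le> f y"
    and c: "c \<in> C"
  shows "c \<le> f c"
proof (cases "c = a0")
  case False
  with c show ?thesis
  proof (cases rule: a0_chain_limit_or_successor)
    case 1
    have "b \<le> f c" if "b \<in> C" "b < c" for b
    proof -
      have "b \<noteq> lub X C" using that a0_chain_le_top[OF c] by (auto dest: leD)
      with that(1) have "b < f b" by (rule a0_chain_succ)
      also have "f b \<le> f c" using mono that c by simp
      finally show ?thesis by simp
    qed
    moreover have "f c \<in> X" using f_closed c a0_chain_subset by blast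
    ultimately show ?thesis using is_lub_least[OF 1] by blast
  next
    case (2 m)
    then show ?thesis using mono c by (metis less_imp_le)
  qed
qed (use assms(1) in simp)

lemma a0_chain_insert_f_top:
  assumes lt: "lub X C < f (lub X C)"
  shows "is_a0_chain (insert (f (lub X C)) C)"
proof -
  define w where "w = lub X C"
  let ?E = "insert (f w) C"
  have below: "c < f w" if "c \<in> C" for c
    using a0_chain_le_top[OF that] lt unfolding w_def by simp
  have "f w \<in> X" using f_closed a0_chain_top_mem a0_chain_subset unfolding w_def by blast
  then have "is_lub X ?E (f w)" using below unfolding is_lub_def by (auto intro: less_imp_le)
  then have lub_E: "lub X ?E = f w" by (rule lub_eqI)
  have lubs: "closed_under_lubs X ?E"
    unfolding closed_under_lubs_def
  proof (intro allI impI)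
    fix Q assume Q: "Q \<subseteq> ?E \<and> Q \<noteq> {}"
    show "(\<exists>u. is_lub X Q u) \<and> lub X Q \<in> ?E"
    proof (cases "f w \<in> Q")
      case True
      with Q \<open>f w \<in> X\<close> below have "is_lub X Q (f w)" unfolding is_lub_def by (auto intro: less_imp_le)
      then show ?thesis using lub_eqI by fastforce
    next
      case False
      with Q have "Q \<subseteq> C" by blast
      then show ?thesis using Q a0_chain_is_lub a0_chain_lub_mem by blast
    qed
  qed
  have succ: "f z \<in> ?E \<and> z < f z \<and> \<not> (\<exists>y\<in>?E. z < y \<and> y < f z)"
    if z: "z \<in> ?E - {lub X ?E}" for z
  proof (cases "z = w")
    case True
    then show ?thesis using lt a0_chain_le_top unfolding w_def by (auto dest: leD)
  next
    case False
    from z have "z \<in> C" using lub_E by auto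
    with False have "f z \<in> C" "z < f z" "\<forall>y\<in>C. \<not> (z < y \<and> y < f z)"
      using a0_chain_succ unfolding w_def by blast+
    moreover from this(1) have "\<not> f w < f z" using below[of "f z"] by auto
    ultimately show ?thesis by blast
  qed
  have "well_ordered_set ?E"
    using a0_chain_well_ordered below by (blast intro: well_ordered_set_insert_top less_imp_le)
  moreover have "a0 \<le> f w" using below a0_in_a0_chain by (blast intro: less_imp_le)
  ultimately show ?thesis
    unfolding a0_chain_def w_def[symmetric]
    using a0_chain_subset \<open>f w \<in> X\<close> a0_in_a0_chain a0_le_a0_chain lubs succ by auto
qed

end

subsection \<open>Comparability of \<open>a0\<close>-chains\<close>

lemma a0_chains_down_step:
  assumes C: "is_a0_chain C" and D: "is_a0_chain D" and c: "c \<in> C" "c \<noteq> a0"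
    and IH: "\<forall>b\<in>C. b < c \<longrightarrow> {y\<in>C. y \<le> b} = {y\<in>D. y \<le> b}"
  shows "{y\<in>C. y \<le> c} = {y\<in>D. y \<le> c} \<or> D \<subseteq> {y\<in>C. y < c}"
proof -
  let ?B = "{y\<in>C. y < c}"
  have BD: "?B \<subseteq> D" using IH by blast
  have "a0 \<in> ?B" using a0_in_a0_chain[OF C] a0_le_a0_chain[OF C] c by (auto simp: order.order_iff_strict)
  then have "?B \<noteq> {}" by blast
  from C c show ?thesis
  proof (cases rule: a0_chain_limit_or_successor)
    case 1
    then have "c \<in> D" using a0_chain_lub_mem[OF D BD \<open>?B \<noteq> {}\<close>] lub_eqI by metis
    have "y \<in> C" if y: "y \<in> D" "y < c" for y
    proof -
      have "y \<in> X" using y a0_chain_subset[OF D] by blast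
      with is_lub_least[OF 1] y(2) obtain b where b: "b \<in> ?B" "\<not> b \<le> y" by (meson leD)
      then have "y \<le> b" using a0_chain_comparable[OF D] BD y(1) by blast
      then show "y \<in> C" using IH b y(1) by blast
    qed
    then have "{y\<in>C. y \<le> c} = {y\<in>D. y \<le> c}"
      using c(1) \<open>c \<in> D\<close> BD by (auto simp: order.order_iff_strict)
    then show ?thesis ..
  next
    case (2 m)
    have down_m: "{y\<in>C. y \<le> m} = {y\<in>D. y \<le> m}" using IH 2 by blast
    then have "m \<in> D" using 2(1) by blast
    show ?thesis
    proof (cases "m = lub X D")
      case True
      then have "D \<subseteq> {y\<in>D. y \<le> m}" using a0_chain_le_top[OF D] by blast
      then show ?thesis using down_m 2(2) by fastforce
    next
      case False
      note succ = a0_chain_succ[OF D \<open>m \<in> D\<close> False]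
      have "y \<in> C" if y: "y \<in> D" "y \<le> c" for y
      proof (cases "y \<le> m")
        case True
        then show ?thesis using down_m y(1) by blast
      next
        case False
        then have "m < y" using a0_chain_comparable[OF D y(1) \<open>m \<in> D\<close>] by (simp add: less_le)
        then have "y = c" using succ(3) y 2(4) by (auto simp: le_less)
        then show ?thesis using c(1) by simp
      qed
      then have "{y\<in>C. y \<le> c} = {y\<in>D. y \<le> c}"
        using succ(1) 2 down_m by (auto simp: order.order_iff_strict)
      then show ?thesis ..
    qed
  qed
qed

lemma a0_chains_down_eq_or_below:
  assumes C: "is_a0_chain C" and D: "is_a0_chain D" and c: "c \<in> C"
  shows "{y\<in>C. y \<le> c} = {y\<in>D. y \<le> c} \<or> D \<subseteq> {y\<in>C. y < c}"
  using a0_chain_well_ordered[OF C] c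
proof (induction rule: well_ordered_set_induct)
  case (less c)
  show ?case
  proof (cases "\<exists>b\<in>C. b < c \<and> D \<subseteq> {y\<in>C. y < b}")
    case True
    then show ?thesis by (auto dest: less_trans)
  next
    case False
    show ?thesis
    proof (cases "c = a0")
      case True
      have "{y\<in>E. y \<le> a0} = {a0}" if "is_a0_chain E" for E
        using a0_in_a0_chain[OF that] a0_le_a0_chain[OF that] by (auto intro: antisym)
      then show ?thesis using True C D by simp
    next
      case False
      with \<open>\<not> (\<exists>b\<in>C. b < c \<and> D \<subseteq> {y\<in>C. y < b})\<close> less.IH
      show ?thesis by (intro a0_chains_down_step[OF C D less.hyps False]) blast
    qed
  qed
qed

lemma a0_chains_comparable:
  assumes C: "is_a0_chain C" and D: "is_a0_chain D"
  shows "initial_segment C D \<or> initial_segment D C"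
proof (cases "\<forall>c\<in>C. {y\<in>C. y \<le> c} = {y\<in>D. y \<le> c}")
  case True
  then have "initial_segment C D" unfolding initial_segment_def by blast
  then show ?thesis ..
next
  case False
  then obtain c where c: "c \<in> C" "D \<subseteq> {y\<in>C. y < c}"
    using a0_chains_down_eq_or_below[OF C D] by blast
  have "x \<in> D" if "x \<in> C" "d \<in> D" "x \<le> d" for x d
  proof -
    have "\<not> C \<subseteq> {y\<in>D. y < d}" using c \<open>d \<in> D\<close> by (auto dest: less_asym)
    then have "{y\<in>D. y \<le> d} = {y\<in>C. y \<le> d}"
      using a0_chains_down_eq_or_below[OF D C \<open>d \<in> D\<close>] by blast
    then show "x \<in> D" using that by blast
  qed
  with c have "initial_segment D C" unfolding initial_segment_def by blast
  then show ?thesis ..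
qed

subsection \<open>The union of all \<open>a0\<close>-chains\<close>

definition union_chains :: "'a set" where
  "union_chains = \<Union>{C. is_a0_chain C}"

lemma a0_chain_subset_union_chains: "is_a0_chain C \<Longrightarrow> C \<subseteq> union_chains"
  unfolding union_chains_def by blast

lemma a0_chains_pairwise_comparable:
  "\<forall>C\<in>{C. is_a0_chain C}. \<forall>D\<in>{C. is_a0_chain C}. initial_segment C D \<or> initial_segment D C"
  using a0_chains_comparable by simp

lemma initial_segment_union_chains: "is_a0_chain C \<Longrightarrow> initial_segment C union_chains"
  unfolding union_chains_def by (rule initial_segment_Union[OF a0_chains_pairwise_comparable]) simp

lemma well_ordered_union_chains: "well_ordered_set union_chains"
  unfolding union_chains_def
  by (rule well_ordered_set_Union[OF _ a0_chains_pairwise_comparable]) (simp add: a0_chain_well_ordered)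

lemma union_chains_subset: "union_chains \<subseteq> X"
  unfolding union_chains_def using a0_chain_subset by blast

lemma a0_chain_singleton: "is_a0_chain {a0}"
proof -
  have "lub X {a0} = a0" using a0_in_X by (intro lub_eqI) (simp add: is_lub_def)
  then show ?thesis
    unfolding a0_chain_def closed_under_lubs_def well_ordered_set_def
    using a0_in_X by (auto simp: subset_singleton_iff is_lub_def)
qed

lemma a0_in_union_chains: "a0 \<in> union_chains"
  using a0_chain_subset_union_chains[OF a0_chain_singleton] by blast

lemma is_lub_union_chains: "is_lub X union_chains (lub X union_chains)"
  using a0_in_union_chains
  by (intro well_ordered_is_lub[OF union_chains_subset _ well_ordered_union_chains]) blast

lemma le_lub_union_chains: "c \<in> union_chains \<Longrightarrow> c \<le> lub X union_chains"
  by (rule is_lub_upper[OF is_lub_union_chains])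

lemma initial_segment_union_chainsD:
  "is_a0_chain C \<Longrightarrow> c \<in> C \<Longrightarrow> y \<in> union_chains \<Longrightarrow> y \<le> c \<Longrightarrow> y \<in> C"
  using initial_segment_union_chains unfolding initial_segment_def by blast

lemma union_chains_comparable: "x \<in> union_chains \<Longrightarrow> y \<in> union_chains \<Longrightarrow> x \<le> y \<or> y \<le> x"
  by (rule well_ordered_set_chain[OF well_ordered_union_chains])

lemma closed_under_lubs_insert_lub_union_chains:
  "closed_under_lubs X (insert (lub X union_chains) union_chains)"
  unfolding closed_under_lubs_def
proof (intro allI impI)
  let ?u = "lub X union_chains" and ?E = "insert (lub X union_chains) union_chains"
  fix Q assume Q: "Q \<subseteq> ?E \<and> Q \<noteq> {}"
  have u: "?u \<in> X" by (rule is_lub_mem[OF is_lub_union_chains])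
  have "well_ordered_set ?E"
    using well_ordered_union_chains le_lub_union_chains by (simp add: well_ordered_set_insert_top)
  then have "well_ordered_set Q" using Q by (simp add: well_ordered_set_subset)
  moreover have "Q \<subseteq> X" using Q union_chains_subset u by blast
  ultimately have Q_lub: "is_lub X Q (lub X Q)" using Q by (simp add: well_ordered_is_lub)
  have "lub X Q \<le> ?u"
    using Q le_lub_union_chains by (intro is_lub_least[OF Q_lub u]) auto
  have "lub X Q \<in> ?E"
  proof (cases "?u \<in> Q \<or> (\<forall>c\<in>union_chains. c \<le> lub X Q)")
    case True
    then have "?u \<le> lub X Q"
      using is_lub_upper[OF Q_lub] is_lub_least[OF is_lub_union_chains is_lub_mem[OF Q_lub]]
      by blast
    with \<open>lub X Q \<le> ?u\<close> show ?thesis by simp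
  next
    case False
    then have Q_sub: "Q \<subseteq> union_chains" using Q by blast
    from False obtain C c where C: "is_a0_chain C" "c \<in> C" "\<not> c \<le> lub X Q"
      unfolding union_chains_def by blast
    have "q \<in> C" if "q \<in> Q" for q
    proof -
      have "\<not> c \<le> q" using is_lub_upper[OF Q_lub that] C(3) by (blast dest: order_trans)
      then have "q \<le> c"
        using union_chains_comparable Q_sub that a0_chain_subset_union_chains[OF C(1)] C(2) by blast
      then show ?thesis using initial_segment_union_chainsD[OF C(1,2)] Q_sub that by blast
    qed
    then have "lub X Q \<in> C" using a0_chain_lub_mem[OF C(1)] Q by blast
    then show ?thesis using a0_chain_subset_union_chains[OF C(1)] by blast
  qed
  with Q_lub show "(\<exists>u. is_lub X Q u) \<and> lub X Q \<in> ?E" by blast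
qed

lemma union_chains_succ:
  assumes z: "z \<in> union_chains" "z \<noteq> lub X union_chains"
  shows "f z \<in> union_chains" "z < f z"
    "\<forall>y\<in>insert (lub X union_chains) union_chains. \<not> (z < y \<and> y < f z)"
proof -
  have "\<not> (\<forall>c\<in>union_chains. c \<le> z)"
    using is_lub_least[OF is_lub_union_chains] le_lub_union_chains z union_chains_subset
    by (metis antisym subsetD)
  then obtain D c where D: "is_a0_chain D" "c \<in> D" "\<not> c \<le> z"
    unfolding union_chains_def by blast
  then have "z \<le> c"
    using union_chains_comparable z(1) a0_chain_subset_union_chains by blast
  then have "z \<in> D" using initial_segment_union_chainsD[OF D(1,2) z(1)] by blast
  moreover have "z \<noteq> lub X D" using a0_chain_le_top[OF D(1,2)] D(3) by blast
  ultimately have succ: "f z \<in> D" "z < f z" "\<forall>y\<in>D. \<not> (z < y \<and> y < f z)"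
    using a0_chain_succ[OF D(1)] by blast+
  then show fz: "f z \<in> union_chains" "z < f z"
    using a0_chain_subset_union_chains[OF D(1)] by blast+
  have "y \<in> D" if "y \<in> union_chains" "y < f z" for y
    using initial_segment_union_chainsD[OF D(1) succ(1) that(1)] that(2) by simp
  moreover have "\<not> lub X union_chains < f z" using le_lub_union_chains[OF fz(1)] by auto
  ultimately show "\<forall>y\<in>insert (lub X union_chains) union_chains. \<not> (z < y \<and> y < f z)"
    using succ(3) by blast
qed

lemma a0_chain_union_chains: "is_a0_chain union_chains"
proof -
  let ?u = "lub X union_chains" and ?E = "insert (lub X union_chains) union_chains"
  have "lub X ?E = ?u"
    using is_lub_union_chains by (intro lub_eqI) (auto simp: is_lub_def)
  moreover have "a0 \<le> c" if "c \<in> ?E" for c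
    using that le_lub_union_chains[OF a0_in_union_chains] a0_le_a0_chain
    unfolding union_chains_def by blast
  moreover have "well_ordered_set ?E"
    using well_ordered_union_chains le_lub_union_chains by (simp add: well_ordered_set_insert_top)
  ultimately have "is_a0_chain ?E"
    unfolding a0_chain_def
    using is_lub_mem[OF is_lub_union_chains] union_chains_subset a0_in_union_chains
      union_chains_succ closed_under_lubs_insert_lub_union_chains
    by auto
  then have "?E = union_chains" using a0_chain_subset_union_chains by blast
  with \<open>is_a0_chain ?E\<close> show ?thesis by simp
qed

lemma union_chains_subset_lubs_of_chains:
  "union_chains \<subseteq> {x \<in> X. \<exists>C. is_a0_chain C \<and> x = lub X C}"
proof
  fix c assume "c \<in> union_chains"
  then obtain C where "is_a0_chain C" "c \<in> C" unfolding union_chains_def by blast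
  then show "c \<in> {x \<in> X. \<exists>C. is_a0_chain C \<and> x = lub X C}"
    using a0_chain_down lub_a0_chain_down a0_chain_subset by fastforce
qed

lemma closed_under_f_union_chains:
  assumes "a0 \<le> f a0"
    and mono: "\<forall>x\<in>union_chains. \<forall>y\<in>union_chains. x \<le> y \<longrightarrow> f x \<le> f y"
  shows "closed_under f union_chains"
  unfolding closed_under_def
proof
  fix z assume z: "z \<in> union_chains"
  show "f z \<in> union_chains"
  proof (cases "z = lub X union_chains")
    case True
    have "z \<le> f z" using a0_chain_le_f[OF a0_chain_union_chains assms z] .
    moreover have "z < f z \<Longrightarrow> f z \<in> union_chains"
      using a0_chain_insert_f_top[OF a0_chain_union_chains] a0_chain_subset_union_chains True
      by blast
    ultimately show ?thesis using z by (cases "z = f z") auto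
  qed (use z union_chains_succ in blast)
qed

end

theorem mainTheorem5:
  fixes X :: "'a::order set" and f :: "'a \<Rightarrow> 'a" and a0 :: 'a and N W :: "'a set"
  assumes "X \<noteq> {}"
    and "strictly_inductive X"
    and "\<forall>x\<in>X. f x \<in> X"
    and "a0 \<in> X"
    and "a0 \<le> f a0"
    and "W = {x \<in> X. \<exists>C. a0_chain X f a0 C \<and> x = lub X C}"
    and "N \<subseteq> X" and "a0 \<in> N" and "closed_under f N" and "closed_under_lubs X N"
    and "\<forall>Z. Z \<subseteq> X \<and> a0 \<in> Z \<and> closed_under f Z \<and> closed_under_lubs X Z \<longrightarrow> N \<subseteq> Z"
    and "\<forall>x\<in>W. \<forall>y\<in>W. x \<le> y \<longrightarrow> f x \<le> f y"
  shows "N \<subseteq> W"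
proof -
  interpret a0_chains X f a0 using assms(2-4) by unfold_locales
  have union_chains_W: "union_chains \<subseteq> W"
    using union_chains_subset_lubs_of_chains assms(6) by simp
  have "closed_under f union_chains"
    using assms(5,12) union_chains_W by (intro closed_under_f_union_chains) blast+
  moreover have "closed_under_lubs X union_chains"
    using a0_chain_union_chains unfolding a0_chain_def by blast
  ultimately have "N \<subseteq> union_chains"
    using assms(11) union_chains_subset a0_in_union_chains by blast
  with union_chains_W show ?thesis by blast
qed

end
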